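(* Let $f_1,\dots,f_N$, $\Phi$, $c$, $\sigma$, $x_k$ and $d_k$ be as in Algorithm X described in the context. Then at every iteration $k$ the backtracking loop terminates after finitely many steps; that is, if $d_k\ne0$ there exists a nonnegative integer $j$ such that $\Phi(x_k+\sigma^jd_k)<\Phi(x_k)+c\sigma^j\Phi'(x_k;d_k)$ (and if $d_k=0$ the loop terminates immediately).
   Context: Standing assumptions: $f_1,\dots,f_N:\mathbb{R}^n\to\mathbb{R}$; (H1) there is $M\in\mathbb{R}$ with $f_j(x)\ge M$ for all $x$ and $j$; (H2) each $f_j\in C^1(\mathbb{R}^n)$ and there is a modulus of continuity $w$ (increasing $w:[0,\infty)\to[0,\infty)$, $w(0)=0$, continuous at $0$) with $\|\nabla f_j(x)-\nabla f_j(y)\|\le w(\|x-y\|)$ for all $x,y$ and $j$. Let $\Phi(x)=\max_{1\le j\le N}f_j(x)$, and $g'(x;d)=\lim_{t\to0^+}\frac{g(x+td)-g(x)}{t}$ denotes the directional derivative. Algorithm X: set $x_0=0$, $c=\sigma=\tfrac12$. At iteration $k$: let $G\in\mathbb{R}^{N\times n}$ have $j$-th row $\nabla f_j(x_k)^T$, $f=(f_1(x_k),\dots,f_N(x_k))^T$; let $\lambda$ be a solution of $\min_\lambda(\tfrac12\lambda^TGG^T\lambda-f^T\lambda)$ subject to $\sum_i\lambda_i=1$, $\lambda_i\ge0$; set $p_k=-G^T\lambda$, and $d_k=0$ if $p_k=0$, otherwise $d_k=p_k/\|p_k\|$. Backtracking loop: for $j=0,1,2,\dots$, with $\alpha=\sigma^j$: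 stop if $d_k=0$, or if $\Phi(x_k+\alpha d_k)<\Phi(x_k)+c\alpha\Phi'(x_k;d_k)$; otherwise increase $j$. With the final $\alpha$ set $\alpha_k=\alpha$, $x_{k+1}=x_k+\alpha_kd_k$, and repeat. *)

theory Defs
  imports "HOL-Analysis.Analysis"
begin

text \<open>Functions f_0, ..., f_(N-1) are indexed by nat, only indices below N matter.
  Gradients are given by a function gf with gf j x the gradient of f j at x.\<close>

definition Phi :: "(nat \<Rightarrow> 'a \<Rightarrow> real) \<Rightarrow> nat \<Rightarrow> 'a \<Rightarrow> real" where
  "Phi f N x = Max ((\<lambda>j. f j x) ` {..<N})"

definition dir_deriv :: "('a::real_normed_vector \<Rightarrow> real) \<Rightarrow> 'a \<Rightarrow> 'a \<Rightarrow> real" where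
  "dir_deriv g x d = Lim (at_right 0) (\<lambda>t. (g (x + t *\<^sub>R d) - g x) / t)"

definition qp_obj :: "(nat \<Rightarrow> 'a \<Rightarrow> real) \<Rightarrow> (nat \<Rightarrow> 'a \<Rightarrow> 'a::real_inner) \<Rightarrow> nat
    \<Rightarrow> 'a \<Rightarrow> (nat \<Rightarrow> real) \<Rightarrow> real" where
  "qp_obj f gf N x lam =
     (1/2) * (\<Sum>i<N. \<Sum>j<N. lam i * (gf i x \<bullet> gf j x) * lam j) - (\<Sum>i<N. f i x * lam i)"

definition std_simplex :: "nat \<Rightarrow> (nat \<Rightarrow> real) set" where
  "std_simplex N = {lam. (\<forall>i<N. 0 \<le> lam i) \<and> (\<Sum>i<N. lam i) = 1}"

definition is_qp_sol :: "(nat \<Rightarrow> 'a \<Rightarrow> real) \<Rightarrow> (nat \<Rightarrow> 'a \<Rightarrow> 'a::real_inner) \<Rightarrow> nat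
    \<Rightarrow> 'a \<Rightarrow> (nat \<Rightarrow> real) \<Rightarrow> bool" where
  "is_qp_sol f gf N x lam \<longleftrightarrow>
     lam \<in> std_simplex N \<and> (\<forall>mu \<in> std_simplex N. qp_obj f gf N x lam \<le> qp_obj f gf N x mu)"

definition pdir :: "(nat \<Rightarrow> 'a \<Rightarrow> 'a::real_normed_vector) \<Rightarrow> nat \<Rightarrow> 'a \<Rightarrow> (nat \<Rightarrow> real) \<Rightarrow> 'a" where
  "pdir gf N x lam = - (\<Sum>i<N. lam i *\<^sub>R gf i x)"

definition ddir :: "(nat \<Rightarrow> 'a \<Rightarrow> 'a::real_normed_vector) \<Rightarrow> nat \<Rightarrow> 'a \<Rightarrow> (nat \<Rightarrow> real) \<Rightarrow> 'a" where
  "ddir gf N x lam = (let p = pdir gf N x lam in if p = 0 then 0 else (1 / norm p) *\<^sub>R p)"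

text \<open>Armijo condition with c = sigma = 1/2 and alpha = sigma^j.\<close>
definition armijo :: "(nat \<Rightarrow> 'a \<Rightarrow> real) \<Rightarrow> nat \<Rightarrow> 'a::real_normed_vector \<Rightarrow> 'a \<Rightarrow> nat \<Rightarrow> bool" where
  "armijo f N x d j \<longleftrightarrow>
     Phi f N (x + ((1/2::real) ^ j) *\<^sub>R d)
       < Phi f N x + (1/2) * ((1/2::real) ^ j) * dir_deriv (Phi f N) x d"

definition bt_stop :: "(nat \<Rightarrow> 'a \<Rightarrow> real) \<Rightarrow> nat \<Rightarrow> 'a::real_normed_vector \<Rightarrow> 'a \<Rightarrow> nat \<Rightarrow> bool" where
  "bt_stop f N x d j \<longleftrightarrow> d = 0 \<or> armijo f N x d j"

end

theory Submission
  imports Defs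
begin

text \<open>Since the multipliers minimise the QP objective over the simplex, moving them towards the
  vertex of an active index j (one with f j x = Phi x) cannot decrease the objective; this first-order
  condition reads gf j x \<bullet> p \<le> -|p|^2 for p = pdir.  The one-sided directional derivative
  of a finite maximum is the maximum of the directional derivatives of the active functions, so
  the derivative of Phi at x in direction p / |p| is at most -|p| < 0.  A negative right derivative
  of t \<mapsto> Phi (x + t d) forces the Armijo inequality with c = 1/2 for all small t > 0, in
  particular for t = (1/2)^j with j large.\<close>

lemma Phi_attained:
  assumes "N \<ge> 1"
  shows "\<exists>j<N. f j x = Phi f N x"
proof -
  have "Phi f N x \<in> (\<lambda>j. f j x) ` {..<N}"
    unfolding Phi_def using assms by (intro Max_in) (auto simp: lessThan_empty_iff)
  then show ?thesis
    by auto
qed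

lemma convex_comb_le_Phi:
  assumes "lam \<in> std_simplex N"
  shows "(\<Sum>i<N. f i x * lam i) \<le> Phi f N x"
proof -
  have "(\<Sum>i<N. f i x * lam i) \<le> (\<Sum>i<N. Phi f N x * lam i)"
    using assms by (intro sum_mono mult_right_mono) (auto simp: std_simplex_def Phi_def)
  also have "\<dots> = Phi f N x"
    using assms by (simp add: std_simplex_def flip: sum_distrib_left)
  finally show ?thesis .
qed

lemma std_simplex_segment:
  assumes "lam \<in> std_simplex N" "mu \<in> std_simplex N" "0 \<le> t" "t \<le> 1"
  shows "(\<lambda>i. lam i + t * (mu i - lam i)) \<in> std_simplex N"
proof -
  have "0 \<le> (1 - t) * lam i + t * mu i" if "i < N" for i
    using assms that by (auto simp: std_simplex_def)
  moreover have "(\<Sum>i<N. lam i + t * (mu i - lam i)) = 1"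
    using assms by (simp add: std_simplex_def sum.distrib sum_subtractf flip: sum_distrib_left)
  ultimately show ?thesis
    by (simp add: std_simplex_def algebra_simps)
qed

lemma std_simplex_vertex: "j < N \<Longrightarrow> (\<lambda>i. if i = j then 1 else 0) \<in> std_simplex N"
  by (simp add: std_simplex_def)

lemma pdir_segment:
  "pdir gf N x (\<lambda>i. lam i + t * (mu i - lam i))
     = pdir gf N x lam + t *\<^sub>R (pdir gf N x mu - pdir gf N x lam)"
  by (simp add: pdir_def algebra_simps sum.distrib scaleR_sum_right sum_subtractf)

lemma qp_obj_pdir:
  "qp_obj f gf N x mu = (pdir gf N x mu \<bullet> pdir gf N x mu) / 2 - (\<Sum>i<N. f i x * mu i)"
proof -
  have "pdir gf N x mu \<bullet> pdir gf N x mu = (\<Sum>i<N. \<Sum>j<N. mu i * (gf i x \<bullet> gf j x) * mu j)"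
    by (simp add: pdir_def inner_sum_left inner_sum_right sum_distrib_left sum_negf mult_ac inner_commute)
  then show ?thesis
    by (simp add: qp_obj_def)
qed

lemma affine_nonneg_on_unit_imp_nonneg:
  fixes a b :: real
  assumes "\<And>t. 0 < t \<Longrightarrow> t \<le> 1 \<Longrightarrow> 0 \<le> a + t * b"
  shows "0 \<le> a"
proof (rule tendsto_lowerbound)
  show "((\<lambda>t. a + t * b) \<longlongrightarrow> a) (at_right 0)"
    by (auto intro!: tendsto_eq_intros)
  show "\<forall>\<^sub>F t in at_right 0. 0 \<le> a + t * b"
    using assms by (auto simp: eventually_at_right_field intro!: exI[of _ 1])
qed simp

lemma qp_sol_variational_ineq:
  assumes qp: "is_qp_sol f gf N x lam" and mu: "mu \<in> std_simplex N"
  shows "(\<Sum>i<N. f i x * mu i) - (\<Sum>i<N. f i x * lam i)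
           \<le> pdir gf N x lam \<bullet> (pdir gf N x mu - pdir gf N x lam)"
proof -
  define p where "p = pdir gf N x lam"
  define v where "v = pdir gf N x mu - p"
  define a where "a = p \<bullet> v - ((\<Sum>i<N. f i x * mu i) - (\<Sum>i<N. f i x * lam i))"
  have "0 \<le> a + t * ((v \<bullet> v) / 2)" if t: "0 < t" "t \<le> 1" for t
  proof -
    define nu where "nu i = lam i + t * (mu i - lam i)" for i
    have "nu \<in> std_simplex N"
      using qp mu t unfolding nu_def is_qp_sol_def by (intro std_simplex_segment) auto
    then have "qp_obj f gf N x lam \<le> qp_obj f gf N x nu"
      using qp by (simp add: is_qp_sol_def)
    moreover have "qp_obj f gf N x nu - qp_obj f gf N x lam = t * (a + t * ((v \<bullet> v) / 2))"
      unfolding qp_obj_pdir nu_def pdir_segment p_def[symmetric] v_def[symmetric] a_def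
      by (simp add: algebra_simps sum.distrib sum_subtractf inner_commute flip: sum_distrib_left)
    ultimately have "0 \<le> t * (a + t * ((v \<bullet> v) / 2))"
      by linarith
    then show ?thesis
      using t by (simp add: zero_le_mult_iff)
  qed
  then have "0 \<le> a"
    by (rule affine_nonneg_on_unit_imp_nonneg)
  then show ?thesis
    by (simp add: a_def p_def v_def)
qed

lemma qp_sol_active_descent:
  assumes qp: "is_qp_sol f gf N x lam" and j: "j < N" "f j x = Phi f N x"
  shows "gf j x \<bullet> pdir gf N x lam \<le> - (pdir gf N x lam \<bullet> pdir gf N x lam)"
proof -
  define e where "e i = (if i = j then 1 else 0 :: real)" for i
  have "(\<Sum>i<N. e i *\<^sub>R gf i x) = (\<Sum>i<N. if i = j then gf i x else 0)"
    by (rule sum.cong) (auto simp: e_def)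
  then have "pdir gf N x e = - gf j x"
    using j by (simp add: pdir_def)
  moreover have "(\<Sum>i<N. f i x * e i) = f j x"
    using j(1) by (simp add: e_def if_distrib cong: if_cong)
  moreover have "(\<Sum>i<N. f i x * lam i) \<le> f j x"
    using qp j by (simp add: is_qp_sol_def convex_comb_le_Phi)
  ultimately show ?thesis
    using qp_sol_variational_ineq[OF qp std_simplex_vertex[OF j(1)]] unfolding e_def[symmetric]
    by (simp add: algebra_simps inner_commute)
qed

lemma ddir_active_descent:
  assumes qp: "is_qp_sol f gf N x lam" and d: "ddir gf N x lam \<noteq> 0"
    and j: "j < N" "f j x = Phi f N x"
  shows "gf j x \<bullet> ddir gf N x lam \<le> - norm (pdir gf N x lam)"
proof -
  define p where "p = pdir gf N x lam"
  have "p \<noteq> 0" and ddir: "ddir gf N x lam = (1 / norm p) *\<^sub>R p"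
    using d by (auto simp: ddir_def p_def Let_def)
  have "gf j x \<bullet> p \<le> - (norm p)\<^sup>2"
    using qp_sol_active_descent[OF qp j] by (simp add: p_def power2_norm_eq_inner)
  then show ?thesis
    using \<open>p \<noteq> 0\<close> by (simp add: ddir p_def[symmetric] divide_le_eq power2_eq_square)
qed

lemma tendsto_Max:
  fixes f :: "'i \<Rightarrow> 'b \<Rightarrow> 'a::linorder_topology"
  assumes "finite I" "I \<noteq> {}" "\<And>i. i \<in> I \<Longrightarrow> (f i \<longlongrightarrow> l i) F"
  shows "((\<lambda>x. Max ((\<lambda>i. f i x) ` I)) \<longlongrightarrow> Max (l ` I)) F"
  using assms
proof (induction I rule: finite_ne_induct)
  case (singleton i)
  then show ?case by simp
next
  case (insert i I)
  then show ?case by (simp add: tendsto_max)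
qed

lemma right_quotient_tendsto_imp_tendsto:
  fixes h :: "real \<Rightarrow> real"
  assumes "((\<lambda>t. (h t - h 0) / t) \<longlongrightarrow> D) (at_right 0)"
  shows "(h \<longlongrightarrow> h 0) (at_right 0)"
proof -
  have "((\<lambda>t. h 0 + t * ((h t - h 0) / t)) \<longlongrightarrow> h 0 + 0 * D) (at_right 0)"
    by (intro tendsto_intros assms)
  moreover have "\<forall>\<^sub>F t in at_right 0. h 0 + t * ((h t - h 0) / t) = h t"
    by (simp add: eventually_at_right_field exI[of _ 1])
  ultimately show ?thesis
    by (simp add: tendsto_cong)
qed

lemma eventually_Max_eq_Max_maximizers:
  fixes h :: "'i \<Rightarrow> 'b \<Rightarrow> real"
  assumes I: "finite I" "I \<noteq> {}" and lim: "\<And>i. i \<in> I \<Longrightarrow> (h i \<longlongrightarrow> c i) F"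
  shows "\<forall>\<^sub>F t in F. Max ((\<lambda>i. h i t) ` I) = Max ((\<lambda>i. h i t) ` {i \<in> I. c i = Max (c ` I)})"
proof -
  define A where "A = {i \<in> I. c i = Max (c ` I)}"
  have "Max (c ` I) \<in> c ` I"
    using I by (intro Max_in) auto
  then obtain a where a: "a \<in> A"
    by (auto simp: A_def)
  have A: "finite A" "A \<subseteq> I"
    using I by (auto simp: A_def)
  have "\<forall>\<^sub>F t in F. h i t < h a t" if i: "i \<in> I - A" for i
  proof -
    have "c i \<le> Max (c ` I)"
      using I i by (intro Max_ge) auto
    then have "c i < c a"
      using a i by (auto simp: A_def)
    moreover have "((\<lambda>t. h a t - h i t) \<longlongrightarrow> c a - c i) F"
      using a i A by (intro tendsto_diff lim) auto
    ultimately have "\<forall>\<^sub>F t in F. 0 < h a t - h i t"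
      by (intro order_tendstoD(1)) auto
    then show "\<forall>\<^sub>F t in F. h i t < h a t"
      by (rule eventually_mono) simp
  qed
  then have "\<forall>\<^sub>F t in F. \<forall>i \<in> I - A. h i t < h a t"
    using I by (intro eventually_ball_finite) auto
  then show ?thesis
    unfolding A_def[symmetric]
  proof (rule eventually_mono)
    fix t assume inactive_below: "\<forall>i \<in> I - A. h i t < h a t"
    have "h a t \<le> Max ((\<lambda>i. h i t) ` A)"
      using A a by (intro Max_ge) auto
    then have "h i t \<le> Max ((\<lambda>i. h i t) ` A)" if "i \<in> I" for i
      using that inactive_below A by (cases "i \<in> A") (auto intro: Max_ge less_imp_le[THEN order_trans])
    moreover have "Max ((\<lambda>i. h i t) ` A) \<le> Max ((\<lambda>i. h i t) ` I)"
      using A I a by (intro Max_mono) auto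
    ultimately show "Max ((\<lambda>i. h i t) ` I) = Max ((\<lambda>i. h i t) ` A)"
      using I by (intro antisym) simp_all
  qed
qed

lemma right_quotient_tendsto_Max:
  fixes h :: "'i \<Rightarrow> real \<Rightarrow> real"
  assumes I: "finite I" "I \<noteq> {}"
    and D: "\<And>i. i \<in> I \<Longrightarrow> ((\<lambda>t. (h i t - h i 0) / t) \<longlongrightarrow> D i) (at_right 0)"
  defines "m \<equiv> Max ((\<lambda>i. h i 0) ` I)"
  shows "((\<lambda>t. (Max ((\<lambda>i. h i t) ` I) - m) / t) \<longlongrightarrow> Max (D ` {i \<in> I. h i 0 = m})) (at_right 0)"
proof -
  define A where "A = {i \<in> I. h i 0 = m}"
  have "m \<in> (\<lambda>i. h i 0) ` I"
    unfolding m_def using I by (intro Max_in) auto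
  then have A: "finite A" "A \<noteq> {}"
    using I by (auto simp: A_def)
  have cont: "(h i \<longlongrightarrow> h i 0) (at_right 0)" if "i \<in> I" for i
    using D[OF that] by (rule right_quotient_tendsto_imp_tendsto)
  have "\<forall>\<^sub>F t in at_right 0. Max ((\<lambda>i. h i t) ` I) = Max ((\<lambda>i. h i t) ` A)"
    unfolding A_def m_def by (rule eventually_Max_eq_Max_maximizers[where c = "\<lambda>i. h i 0", OF I cont])
  then have "\<forall>\<^sub>F t in at_right 0. Max ((\<lambda>i. (h i t - h i 0) / t) ` A) = (Max ((\<lambda>i. h i t) ` I) - m) / t"
    using eventually_at_right_less[of 0]
  proof eventually_elim
    case (elim t)
    have "mono (\<lambda>y. (y - m) / t)"
      using elim(2) by (auto intro!: monoI divide_right_mono)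
    then have "(Max ((\<lambda>i. h i t) ` A) - m) / t = Max ((\<lambda>i. (h i t - m) / t) ` A)"
      using A mono_Max_commute[of "\<lambda>y. (y - m) / t" "(\<lambda>i. h i t) ` A"] by (simp add: image_image)
    moreover have "(\<lambda>i. (h i t - m) / t) ` A = (\<lambda>i. (h i t - h i 0) / t) ` A"
      by (rule image_cong) (auto simp: A_def)
    ultimately show ?case
      using elim(1) by simp
  qed
  moreover have "((\<lambda>t. Max ((\<lambda>i. (h i t - h i 0) / t) ` A)) \<longlongrightarrow> Max (D ` A)) (at_right 0)"
    using A D by (intro tendsto_Max) (auto simp: A_def)
  ultimately show ?thesis
    unfolding A_def by (rule Lim_transform_eventually[rotated])
qed

lemma has_derivative_dir_quotient:
  assumes "(f has_derivative (\<lambda>h. g \<bullet> h)) (at x)"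
  shows "((\<lambda>t. (f (x + t *\<^sub>R d) - f x) / t) \<longlongrightarrow> g \<bullet> d) (at_right 0)"
proof -
  have "((\<lambda>t. x + t *\<^sub>R d) has_derivative (\<lambda>t. t *\<^sub>R d)) (at 0)"
    by (auto intro!: derivative_eq_intros)
  moreover have "(f has_derivative (\<lambda>h. g \<bullet> h)) (at (x + 0 *\<^sub>R d))"
    using assms by simp
  ultimately have "((\<lambda>t. f (x + t *\<^sub>R d)) has_derivative (\<lambda>t. g \<bullet> (t *\<^sub>R d))) (at 0)"
    by (rule has_derivative_compose)
  moreover have "(\<lambda>t. g \<bullet> (t *\<^sub>R d)) = (*) (g \<bullet> d)"
    by auto
  ultimately have "((\<lambda>t. f (x + t *\<^sub>R d)) has_field_derivative g \<bullet> d) (at 0)"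
    by (simp only: has_field_derivative_def)
  then have "((\<lambda>t. f (x + t *\<^sub>R d)) has_field_derivative g \<bullet> d) (at 0 within {0<..})"
    by (rule has_field_derivative_at_within)
  then show ?thesis
    by (simp add: has_field_derivative_iff)
qed

lemma Phi_dir_quotient_tendsto:
  assumes N: "N \<ge> 1"
    and grad: "\<And>j. j < N \<Longrightarrow> (f j has_derivative (\<lambda>h. gf j x \<bullet> h)) (at x)"
  shows "((\<lambda>t. (Phi f N (x + t *\<^sub>R d) - Phi f N x) / t)
           \<longlongrightarrow> Max ((\<lambda>j. gf j x \<bullet> d) ` {j \<in> {..<N}. f j x = Phi f N x})) (at_right 0)"
proof -
  have "((\<lambda>t. (f j (x + t *\<^sub>R d) - f j x) / t) \<longlongrightarrow> gf j x \<bullet> d) (at_right 0)" if "j < N" for j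
    using grad[OF that] by (rule has_derivative_dir_quotient)
  then show ?thesis
    using right_quotient_tendsto_Max[of "{..<N}" "\<lambda>j t. f j (x + t *\<^sub>R d)" "\<lambda>j. gf j x \<bullet> d"] N
    by (simp add: Phi_def lessThan_empty_iff)
qed

lemma eventually_armijo:
  fixes \<phi> :: "real \<Rightarrow> real"
  assumes "((\<lambda>t. (\<phi> t - \<phi> 0) / t) \<longlongrightarrow> D) (at_right 0)" "D < 0" "c < 1"
  shows "\<forall>\<^sub>F t in at_right 0. \<phi> t < \<phi> 0 + c * t * D"
proof -
  have "D < c * D"
    using assms(2,3) by (simp add: mult_less_cancel_right2)
  then have "\<forall>\<^sub>F t in at_right 0. (\<phi> t - \<phi> 0) / t < c * D"
    using assms(1) by (rule order_tendstoD(2)[rotated])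
  with eventually_at_right_less[of 0] show ?thesis
    by eventually_elim (simp add: divide_less_eq algebra_simps)
qed

lemma ex_armijo_if_dir_quotient_neg:
  assumes lim: "((\<lambda>t. (Phi f N (x + t *\<^sub>R d) - Phi f N x) / t) \<longlongrightarrow> D) (at_right 0)"
    and "D < 0"
  shows "\<exists>j. armijo f N x d j"
proof -
  have "dir_deriv (Phi f N) x d = D"
    unfolding dir_deriv_def using lim by (intro tendsto_Lim) auto
  moreover have "\<forall>\<^sub>F t in at_right 0. Phi f N (x + t *\<^sub>R d) < Phi f N x + 1/2 * t * D"
    using eventually_armijo[of "\<lambda>t. Phi f N (x + t *\<^sub>R d)" D "1/2"] lim \<open>D < 0\<close> by simp
  moreover have "filterlim (\<lambda>j. (1/2::real) ^ j) (at_right 0) sequentially"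
    by (intro tendsto_imp_filterlim_at_right LIMSEQ_power_zero) auto
  ultimately have "\<forall>\<^sub>F j in sequentially. armijo f N x d j"
    unfolding armijo_def by (auto dest: eventually_compose_filterlim)
  then show ?thesis
    by (auto simp: eventually_sequentially)
qed

lemma ex_armijo_ddir:
  assumes N: "N \<ge> 1"
    and grad: "\<And>j. j < N \<Longrightarrow> (f j has_derivative (\<lambda>h. gf j x \<bullet> h)) (at x)"
    and qp: "is_qp_sol f gf N x lam" and d: "ddir gf N x lam \<noteq> 0"
  shows "\<exists>j. armijo f N x (ddir gf N x lam) j"
proof -
  define A where "A = {j \<in> {..<N}. f j x = Phi f N x}"
  define D where "D = Max ((\<lambda>j. gf j x \<bullet> ddir gf N x lam) ` A)"
  have "A \<noteq> {}"
    using Phi_attained[OF N] by (auto simp: A_def)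
  then have "D \<in> (\<lambda>j. gf j x \<bullet> ddir gf N x lam) ` A"
    unfolding D_def A_def by (intro Max_in) auto
  then have "D \<le> - norm (pdir gf N x lam)"
    using ddir_active_descent[OF qp d] by (auto simp: A_def)
  moreover have "0 < norm (pdir gf N x lam)"
    using d by (auto simp: ddir_def Let_def)
  ultimately have "D < 0"
    by linarith
  then show ?thesis
    using Phi_dir_quotient_tendsto[where f = f and gf = gf and x = x, OF N grad]
    unfolding D_def A_def by (intro ex_armijo_if_dir_quotient_neg)
qed

theorem theorem4:
  fixes f :: "nat \<Rightarrow> real ^ 'n \<Rightarrow> real"
    and gf :: "nat \<Rightarrow> real ^ 'n \<Rightarrow> real ^ 'n"
    and N :: nat and M :: real and w :: "real \<Rightarrow> real"
    and xs :: "nat \<Rightarrow> real ^ 'n" and lams :: "nat \<Rightarrow> nat \<Rightarrow> real"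
  assumes N: "N \<ge> 1"
    and H1: "\<And>j x. j < N \<Longrightarrow> f j x \<ge> M"
    and grad: "\<And>j x. j < N \<Longrightarrow> (f j has_derivative (\<lambda>h. gf j x \<bullet> h)) (at x)"
    and C1: "\<And>j. j < N \<Longrightarrow> continuous_on UNIV (gf j)"
    and w_mono: "mono_on {0..} w" and w0: "w 0 = 0" and w_cont: "continuous (at_right 0) w"
    and H2: "\<And>j x y. j < N \<Longrightarrow> norm (gf j x - gf j y) \<le> w (norm (x - y))"
    and x0: "xs 0 = 0"
    and qp: "\<And>k. is_qp_sol f gf N (xs k) (lams k)"
    and step: "\<And>k. xs (Suc k) = xs k + ((1/2::real) ^ (LEAST j. bt_stop f N (xs k) (ddir gf N (xs k) (lams k)) j))
                                         *\<^sub>R ddir gf N (xs k) (lams k)"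
  shows "\<forall>k. (\<exists>j. bt_stop f N (xs k) (ddir gf N (xs k) (lams k)) j) \<and>
             (ddir gf N (xs k) (lams k) \<noteq> 0 \<longrightarrow>
                (\<exists>j. armijo f N (xs k) (ddir gf N (xs k) (lams k)) j))"
  \<comment> \<open>The lower bound, the modulus of continuity and the update rule matter for the convergence
    of the method, not for the termination of its line search.\<close>
proof (intro allI conjI impI)
  fix k
  let ?d = "ddir gf N (xs k) (lams k)"
  have armijo: "\<exists>j. armijo f N (xs k) ?d j" if "?d \<noteq> 0"
    using N grad qp that by (rule ex_armijo_ddir)
  then show "\<exists>j. bt_stop f N (xs k) ?d j"
    by (cases "?d = 0") (auto simp: bt_stop_def)
  show "\<exists>j. armijo f N (xs k) ?d j" if "?d \<noteq> 0"
    using that by (rule armijo)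
qed

end
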